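(* Let $C$ be a set of clients, $F$ a set of facilities, $o_f\ge0$ opening costs, $d(c,f)\ge 0$ connection costs, and $p_c\in[0,1]$ activation probabilities, and let $g_\pi(B)=1-\prod_{c\in B}(1-p_c)$ for $B\subseteq C$. Let $OPT_{\text{CONF-LP-FL}}$ be the optimum of the linear program $$\min \sum_{f\in F}o_f\sum_{B\subseteq C}y_B^f g_\pi(B)+\sum_{c\in C}\sum_{f\in F}p_c\, d(c,f)\sum_{B\subseteq C:\,c\in B}y_B^f$$ subject to $\sum_{f\in F}\sum_{B\subseteq C:\,c\in B}y_B^f\ge 1$ for all $c\in C$ and $y_B^f\ge 0$ for all $f\in F$, $B\subseteq C$; and let $OPT_{\text{LP-FL}}$ be the optimum of $$\min \sum_{f\in F}o_f\max_{c\in C}x_c^f+\sum_{f\in F}o_f\sum_{c\in C}p_c\bar x_c^f+\sum_{c\in C}\sum_{f\in F}p_c\,d(c,f)(x_c^f+\bar x_c^f)$$ subject to $\sum_{f\in F}(x_c^f+\bar x_c^f)\ge 1$ for all $c\in C$ and $x_c^f,\bar x_c^f\ge 0$. Then $OPT_{\text{LP-FL}}\le\frac{e}{e-1}\,OPT_{\text{CONF-LP-FL}}$. *)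

theory Defs
  imports Complex_Main "HOL-Library.Extended_Real"
begin

definition gpi :: "('c \<Rightarrow> real) \<Rightarrow> 'c set \<Rightarrow> real" where
  "gpi p B = 1 - (\<Prod>c\<in>B. 1 - p c)"

definition conf_feasible :: "'c set \<Rightarrow> 'f set \<Rightarrow> ('f \<Rightarrow> 'c set \<Rightarrow> real) \<Rightarrow> bool" where
  "conf_feasible C F y \<longleftrightarrow>
     (\<forall>c\<in>C. (\<Sum>f\<in>F. \<Sum>B\<in>{B. B \<subseteq> C \<and> c \<in> B}. y f B) \<ge> 1) \<and>
     (\<forall>f\<in>F. \<forall>B. B \<subseteq> C \<longrightarrow> y f B \<ge> 0)"

definition conf_obj :: "'c set \<Rightarrow> 'f set \<Rightarrow> ('f \<Rightarrow> real) \<Rightarrow> ('c \<Rightarrow> 'f \<Rightarrow> real) \<Rightarrow> ('c \<Rightarrow> real)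
    \<Rightarrow> ('f \<Rightarrow> 'c set \<Rightarrow> real) \<Rightarrow> real" where
  "conf_obj C F oc d p y =
     (\<Sum>f\<in>F. oc f * (\<Sum>B\<in>{B. B \<subseteq> C}. y f B * gpi p B)) +
     (\<Sum>c\<in>C. \<Sum>f\<in>F. p c * d c f * (\<Sum>B\<in>{B. B \<subseteq> C \<and> c \<in> B}. y f B))"

definition OPT_CONF_LP_FL :: "'c set \<Rightarrow> 'f set \<Rightarrow> ('f \<Rightarrow> real) \<Rightarrow> ('c \<Rightarrow> 'f \<Rightarrow> real) \<Rightarrow> ('c \<Rightarrow> real) \<Rightarrow> ereal" where
  "OPT_CONF_LP_FL C F oc d p = Inf {ereal (conf_obj C F oc d p y) | y. conf_feasible C F y}"

definition lp_feasible :: "'c set \<Rightarrow> 'f set \<Rightarrow> ('c \<Rightarrow> 'f \<Rightarrow> real) \<Rightarrow> ('c \<Rightarrow> 'f \<Rightarrow> real) \<Rightarrow> bool" where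
  "lp_feasible C F x xb \<longleftrightarrow>
     (\<forall>c\<in>C. (\<Sum>f\<in>F. x c f + xb c f) \<ge> 1) \<and>
     (\<forall>c\<in>C. \<forall>f\<in>F. x c f \<ge> 0 \<and> xb c f \<ge> 0)"

definition lp_obj :: "'c set \<Rightarrow> 'f set \<Rightarrow> ('f \<Rightarrow> real) \<Rightarrow> ('c \<Rightarrow> 'f \<Rightarrow> real) \<Rightarrow> ('c \<Rightarrow> real)
    \<Rightarrow> ('c \<Rightarrow> 'f \<Rightarrow> real) \<Rightarrow> ('c \<Rightarrow> 'f \<Rightarrow> real) \<Rightarrow> real" where
  "lp_obj C F oc d p x xb =
     (\<Sum>f\<in>F. oc f * Max ((\<lambda>c. x c f) ` C)) +
     (\<Sum>f\<in>F. oc f * (\<Sum>c\<in>C. p c * xb c f)) +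
     (\<Sum>c\<in>C. \<Sum>f\<in>F. p c * d c f * (x c f + xb c f))"

definition OPT_LP_FL :: "'c set \<Rightarrow> 'f set \<Rightarrow> ('f \<Rightarrow> real) \<Rightarrow> ('c \<Rightarrow> 'f \<Rightarrow> real) \<Rightarrow> ('c \<Rightarrow> real) \<Rightarrow> ereal" where
  "OPT_LP_FL C F oc d p = Inf {ereal (lp_obj C F oc d p x xb) | x xb. lp_feasible C F x xb}"

end

theory Submission
  imports Defs "HOL-Analysis.Convex"
begin

text \<open>Split each configuration solution by the expected demand \<open>\<Sum>c\<in>B. p c\<close> of its
  client set: configurations of demand at least 1 go to \<open>x\<close>, whose opening cost is paid
  by the maximum, the others to \<open>x\<^sub>b\<close>, whose opening cost is paid in proportion to the demand.
  Either way a configuration is charged \<open>min 1 (\<Sum>c\<in>B. p c)\<close> times its opening cost, while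
  the configuration LP charges \<open>g\<^sub>\<pi>(B) \<ge> 1 - exp (- \<Sum>c\<in>B. p c)\<close>; by concavity of
  \<open>s \<mapsto> 1 - exp (-s)\<close> the ratio is at most \<open>e/(e-1)\<close>. Connection costs are unchanged.\<close>

lemma prod_one_minus_le_exp_neg_sum:
  fixes p :: "'a \<Rightarrow> real"
  assumes "finite B" and "\<forall>c\<in>B. 0 \<le> p c \<and> p c \<le> 1"
  shows "(\<Prod>c\<in>B. 1 - p c) \<le> exp (- (\<Sum>c\<in>B. p c))"
proof -
  have "(\<Prod>c\<in>B. 1 - p c) \<le> (\<Prod>c\<in>B. exp (- p c))"
    using assms(2) exp_ge_add_one_self[of "- p _"] by (intro prod_mono) auto
  also have "\<dots> = exp (- (\<Sum>c\<in>B. p c))"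
    using assms(1) by (simp add: exp_sum[symmetric] sum_negf)
  finally show ?thesis .
qed

lemma min_one_mult_le_one_minus_exp_neg:
  fixes s :: real
  assumes "s \<ge> 0"
  shows "min 1 s * (1 - exp (-1)) \<le> 1 - exp (- s)"
proof (cases "s \<le> 1")
  case True
  have "exp ((1 - s) *\<^sub>R 0 + s *\<^sub>R (-1)) \<le> (1 - s) * exp 0 + s * exp (-1)"
    by (rule convex_onD[OF exp_convex]) (use assms True in auto)
  then show ?thesis using True by (simp add: algebra_simps)
qed simp

lemma min_one_sum_le_gpi:
  fixes p :: "'a \<Rightarrow> real"
  assumes "finite B" and "\<forall>c\<in>B. 0 \<le> p c \<and> p c \<le> 1"
  shows "min 1 (\<Sum>c\<in>B. p c) \<le> exp 1 / (exp 1 - 1) * gpi p B"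
proof -
  have "(\<Sum>c\<in>B. p c) \<ge> 0"
    using assms(2) by (simp add: sum_nonneg)
  then have "min 1 (\<Sum>c\<in>B. p c) * (1 - exp (-1)) \<le> gpi p B"
    using min_one_mult_le_one_minus_exp_neg prod_one_minus_le_exp_neg_sum[OF assms]
    unfolding gpi_def by (meson diff_left_mono order_trans)
  then have "exp 1 / (exp 1 - 1) * (min 1 (\<Sum>c\<in>B. p c) * (1 - exp (-1)))
      \<le> exp 1 / (exp 1 - 1) * gpi p B"
    by (rule mult_left_mono) simp
  moreover have "exp 1 / (exp 1 - 1) * (1 - exp (-1)) = (1::real)"
    by (simp add: exp_minus field_simps)
  ultimately show ?thesis
    by (simp add: mult.left_commute[of _ "min 1 _"])
qed

lemma sum_over_subsets_containing_swap:
  fixes p :: "'c \<Rightarrow> real" and g :: "'c set \<Rightarrow> real"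
  assumes "finite C"
  shows "(\<Sum>c\<in>C. p c * (\<Sum>B\<in>{B. B \<subseteq> C \<and> c \<in> B}. g B))
       = (\<Sum>B\<in>{B. B \<subseteq> C}. g B * (\<Sum>c\<in>B. p c))"
proof -
  have "(\<Sum>c\<in>C. p c * (\<Sum>B\<in>{B. B \<subseteq> C \<and> c \<in> B}. g B))
      = (\<Sum>c\<in>C. \<Sum>B\<in>{B. B \<subseteq> C}. if c \<in> B then p c * g B else 0)"
    using assms by (simp add: sum_distrib_left sum.inter_filter[symmetric] conj_commute)
  also have "\<dots> = (\<Sum>B\<in>{B. B \<subseteq> C}. \<Sum>c\<in>C. if c \<in> B then p c * g B else 0)"
    by (rule sum.swap)
  also have "\<dots> = (\<Sum>B\<in>{B. B \<subseteq> C}. g B * (\<Sum>c\<in>B. p c))"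
    using assms
    by (intro sum.cong refl)
      (simp add: sum.inter_filter[symmetric] sum_distrib_left mult.commute Int_absorb1 Int_def[symmetric])
  finally show ?thesis .
qed

definition conf_heavy :: "'c set \<Rightarrow> ('c \<Rightarrow> real) \<Rightarrow> ('f \<Rightarrow> 'c set \<Rightarrow> real) \<Rightarrow> 'c \<Rightarrow> 'f \<Rightarrow> real" where
  "conf_heavy C p y c f = (\<Sum>B\<in>{B. B \<subseteq> C \<and> c \<in> B}. if 1 \<le> sum p B then y f B else 0)"

definition conf_light :: "'c set \<Rightarrow> ('c \<Rightarrow> real) \<Rightarrow> ('f \<Rightarrow> 'c set \<Rightarrow> real) \<Rightarrow> 'c \<Rightarrow> 'f \<Rightarrow> real" where
  "conf_light C p y c f = (\<Sum>B\<in>{B. B \<subseteq> C \<and> c \<in> B}. if 1 \<le> sum p B then 0 else y f B)"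

lemma conf_heavy_plus_light:
  "conf_heavy C p y c f + conf_light C p y c f = (\<Sum>B\<in>{B. B \<subseteq> C \<and> c \<in> B}. y f B)"
  unfolding conf_heavy_def conf_light_def sum.distrib[symmetric] by (rule sum.cong) auto

lemma lp_feasible_conf_split:
  assumes "conf_feasible C F y"
  shows "lp_feasible C F (conf_heavy C p y) (conf_light C p y)"
  using assms unfolding lp_feasible_def conf_feasible_def conf_heavy_plus_light
  by (auto simp: conf_heavy_def conf_light_def intro!: sum_nonneg)

lemma conf_split_opening_le:
  assumes "finite C" and "C \<noteq> {}" and y_nonneg: "\<forall>B. B \<subseteq> C \<longrightarrow> y f B \<ge> 0"
  shows "Max ((\<lambda>c. conf_heavy C p y c f) ` C) + (\<Sum>c\<in>C. p c * conf_light C p y c f)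
      \<le> (\<Sum>B\<in>{B. B \<subseteq> C}. y f B * min 1 (sum p B))"
proof -
  let ?heavy = "\<lambda>B. if 1 \<le> sum p B then y f B else 0"
  let ?light = "\<lambda>B. if 1 \<le> sum p B then 0 else y f B"
  have "conf_heavy C p y c f \<le> (\<Sum>B\<in>{B. B \<subseteq> C}. ?heavy B)" for c
    unfolding conf_heavy_def using assms(1) y_nonneg by (intro sum_mono2) auto
  then have "Max ((\<lambda>c. conf_heavy C p y c f) ` C) \<le> (\<Sum>B\<in>{B. B \<subseteq> C}. ?heavy B)"
    using assms(1,2) by simp
  moreover have "(\<Sum>c\<in>C. p c * conf_light C p y c f) = (\<Sum>B\<in>{B. B \<subseteq> C}. ?light B * sum p B)"
    unfolding conf_light_def by (rule sum_over_subsets_containing_swap[OF assms(1)])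
  moreover have "(\<Sum>B\<in>{B. B \<subseteq> C}. ?heavy B) + (\<Sum>B\<in>{B. B \<subseteq> C}. ?light B * sum p B)
      = (\<Sum>B\<in>{B. B \<subseteq> C}. y f B * min 1 (sum p B))"
    unfolding sum.distrib[symmetric] by (rule sum.cong) (auto simp: min_def)
  ultimately show ?thesis by linarith
qed

lemma lp_obj_conf_split_le:
  assumes "finite C" and "C \<noteq> {}" and "finite F"
    and oc_nonneg: "\<forall>f\<in>F. oc f \<ge> 0"
    and d_nonneg: "\<forall>c\<in>C. \<forall>f\<in>F. d c f \<ge> 0"
    and p_prob: "\<forall>c\<in>C. 0 \<le> p c \<and> p c \<le> 1"
    and y: "conf_feasible C F y"
  shows "lp_obj C F oc d p (conf_heavy C p y) (conf_light C p y)
      \<le> exp 1 / (exp 1 - 1) * conf_obj C F oc d p y"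
proof -
  define k :: real where "k = exp 1 / (exp 1 - 1)"
  have k_ge_1: "k \<ge> 1"
    unfolding k_def by (simp add: field_simps)
  have y_nonneg: "\<forall>B. B \<subseteq> C \<longrightarrow> y f B \<ge> 0" if "f \<in> F" for f
    using y that unfolding conf_feasible_def by auto
  have opening_cost: "oc f * Max ((\<lambda>c. conf_heavy C p y c f) ` C)
        + oc f * (\<Sum>c\<in>C. p c * conf_light C p y c f)
      \<le> k * (oc f * (\<Sum>B\<in>{B. B \<subseteq> C}. y f B * gpi p B))" if f: "f \<in> F" for f
  proof -
    have "(\<Sum>B\<in>{B. B \<subseteq> C}. y f B * min 1 (sum p B)) \<le> (\<Sum>B\<in>{B. B \<subseteq> C}. y f B * (k * gpi p B))"
    proof (intro sum_mono mult_left_mono)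
      fix B assume "B \<in> {B. B \<subseteq> C}"
      then show "min 1 (sum p B) \<le> k * gpi p B" "0 \<le> y f B"
        unfolding k_def using min_one_sum_le_gpi[of B p] finite_subset[OF _ assms(1)] p_prob
          y_nonneg[OF f] by auto
    qed
    then have "Max ((\<lambda>c. conf_heavy C p y c f) ` C) + (\<Sum>c\<in>C. p c * conf_light C p y c f)
        \<le> k * (\<Sum>B\<in>{B. B \<subseteq> C}. y f B * gpi p B)"
      using conf_split_opening_le[of C y f p, OF assms(1,2) y_nonneg[OF f]]
      by (simp add: sum_distrib_left mult.left_commute)
    then have "oc f * (Max ((\<lambda>c. conf_heavy C p y c f) ` C) + (\<Sum>c\<in>C. p c * conf_light C p y c f))
        \<le> oc f * (k * (\<Sum>B\<in>{B. B \<subseteq> C}. y f B * gpi p B))"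
      using oc_nonneg f by (intro mult_left_mono) auto
    then show ?thesis
      by (simp add: distrib_left mult.left_commute)
  qed
  define D where "D = (\<Sum>c\<in>C. \<Sum>f\<in>F. p c * d c f * (\<Sum>B\<in>{B. B \<subseteq> C \<and> c \<in> B}. y f B))"
  have "D \<ge> 0"
    unfolding D_def using p_prob d_nonneg y_nonneg by (auto intro!: sum_nonneg mult_nonneg_nonneg)
  then have "D \<le> k * D"
    using mult_right_mono[OF k_ge_1] by simp
  have "lp_obj C F oc d p (conf_heavy C p y) (conf_light C p y)
      = (\<Sum>f\<in>F. oc f * Max ((\<lambda>c. conf_heavy C p y c f) ` C)
          + oc f * (\<Sum>c\<in>C. p c * conf_light C p y c f)) + D"
    unfolding lp_obj_def D_def conf_heavy_plus_light by (simp add: sum.distrib)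
  also have "\<dots> \<le> (\<Sum>f\<in>F. k * (oc f * (\<Sum>B\<in>{B. B \<subseteq> C}. y f B * gpi p B))) + k * D"
    using sum_mono[OF opening_cost] \<open>D \<le> k * D\<close> by (rule add_mono)
  also have "\<dots> = k * conf_obj C F oc d p y"
    unfolding conf_obj_def D_def by (simp add: sum_distrib_left distrib_left)
  finally show ?thesis
    unfolding k_def .
qed

lemma Inf_le_cmult_Inf_ereal:
  fixes A B :: "ereal set" and K :: real
  assumes "K > 0" and "\<And>a. a \<in> A \<Longrightarrow> \<exists>b\<in>B. b \<le> ereal K * a"
  shows "Inf B \<le> ereal K * Inf A"
proof -
  have K_inverse: "ereal K * ereal (1 / K) = 1"
    using assms(1) by simp
  have "Inf B * ereal (1 / K) \<le> Inf A"
  proof (rule Inf_greatest)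
    fix a assume "a \<in> A"
    then obtain b where "b \<in> B" and "b \<le> ereal K * a"
      using assms(2) by blast
    then have "Inf B \<le> ereal K * a"
      using Inf_lower order_trans by blast
    then have "Inf B * ereal (1 / K) \<le> ereal K * a * ereal (1 / K)"
      by (rule ereal_mult_right_mono) (use assms(1) in simp)
    also have "\<dots> = a"
      using K_inverse by (simp add: mult.commute mult.left_commute)
    finally show "Inf B * ereal (1 / K) \<le> a" .
  qed
  then have "ereal K * (Inf B * ereal (1 / K)) \<le> ereal K * Inf A"
    by (rule ereal_mult_left_mono) (use assms(1) in simp)
  then show ?thesis
    using K_inverse by (simp add: mult.commute mult.left_commute)
qed

theorem lemma5:
  fixes C :: "'c set" and F :: "'f set"
    and oc :: "'f \<Rightarrow> real" and d :: "'c \<Rightarrow> 'f \<Rightarrow> real" and p :: "'c \<Rightarrow> real"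
  assumes "finite C" and "C \<noteq> {}" and "finite F"
    and "\<forall>f\<in>F. oc f \<ge> 0"
    and "\<forall>c\<in>C. \<forall>f\<in>F. d c f \<ge> 0"
    and "\<forall>c\<in>C. 0 \<le> p c \<and> p c \<le> 1"
  shows "OPT_LP_FL C F oc d p \<le> ereal (exp 1 / (exp 1 - 1)) * OPT_CONF_LP_FL C F oc d p"
  unfolding OPT_LP_FL_def OPT_CONF_LP_FL_def
proof (rule Inf_le_cmult_Inf_ereal)
  show "exp 1 / (exp 1 - 1) > (0::real)"
    by simp
next
  fix a assume "a \<in> {ereal (conf_obj C F oc d p y) | y. conf_feasible C F y}"
  then obtain y where a: "a = ereal (conf_obj C F oc d p y)" and y: "conf_feasible C F y"
    by blast
  then show "\<exists>b\<in>{ereal (lp_obj C F oc d p x xb) | x xb. lp_feasible C F x xb}.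
      b \<le> ereal (exp 1 / (exp 1 - 1)) * a"
    using lp_feasible_conf_split[OF y] lp_obj_conf_split_le[OF assms y] by fastforce
qed

end
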